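(* Let $M,N$ be matroids on a common set $E$, let $I$ be independent in both $M$ and $N$, let $W:=W(M/I,N/I)$ and let $B\in B(M/I,N/I,W)$. Then $I\cup B$ is a nice feasible set with respect to $(M,N)$.
   Context: Matroids are possibly infinite. $M^*$ dual, $M\upharpoonright X$ restriction, $M/X:=(M^*\upharpoonright(E\setminus X))^*$ (on $E\setminus X$), $M.X:=M/(E\setminus X)$. A loop is an element $e$ with $\{e\}$ dependent; $r(K)=0$ means the empty set is a base of $K$. $W$ is an $(M,N)$-wave if $M\upharpoonright W$ has a base independent in $N.W$; the union of all waves is a wave, denoted $W(M,N)$. $B(M,N,X)$ is the set of common bases of $M\upharpoonright X$ and $N.X$. $\mathsf{cond}(M,N)$: for every $(M,N)$-wave $W$, $N.W$ has an $M$-independent base. $\mathsf{cond}^+(M,N)$: $W(M,N)$ consists of $M$-loops and $r(N.W(M,N))=0$. A set $I$ independent in both $M$ and $N$ is feasible if $\mathsf{cond}(M/I,N/I)$ holds, and nice feasible if moreover $\mathsf{cond}^+(M/I,N/I)$ holds. *)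

theory Defs
  imports Main
begin

text \<open>Possibly infinite matroids, given by a ground set and a family of
independent sets, with the axioms (I1), (I2), (I3) and (IM).\<close>

type_synonym 'a matroid = "'a set \<times> 'a set set"

definition ground :: "'a matroid \<Rightarrow> 'a set" where
  "ground M = fst M"

definition indep :: "'a matroid \<Rightarrow> 'a set \<Rightarrow> bool" where
  "indep M I \<longleftrightarrow> I \<in> snd M"

definition base :: "'a matroid \<Rightarrow> 'a set \<Rightarrow> bool" where
  "base M B \<longleftrightarrow> indep M B \<and> (\<forall>J. indep M J \<and> B \<subseteq> J \<longrightarrow> J = B)"

definition is_matroid :: "'a matroid \<Rightarrow> bool" where
  "is_matroid M \<longleftrightarrow>
     (\<forall>I. indep M I \<longrightarrow> I \<subseteq> ground M) \<and>
     indep M {} \<and>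
     (\<forall>I J. indep M J \<and> I \<subseteq> J \<longrightarrow> indep M I) \<and>
     (\<forall>I B. indep M I \<and> \<not> base M I \<and> base M B \<longrightarrow>
            (\<exists>x \<in> B - I. indep M (insert x I))) \<and>
     (\<forall>I X. indep M I \<and> I \<subseteq> X \<and> X \<subseteq> ground M \<longrightarrow>
            (\<exists>J. indep M J \<and> I \<subseteq> J \<and> J \<subseteq> X \<and>
                 (\<forall>K. indep M K \<and> J \<subseteq> K \<and> K \<subseteq> X \<longrightarrow> K = J)))"

definition dual :: "'a matroid \<Rightarrow> 'a matroid" where
  "dual M = (ground M, {X. X \<subseteq> ground M \<and> (\<exists>B. base M B \<and> X \<inter> B = {})})"

text \<open>Restriction \<open>M \<upharpoonright> X\<close> (used for \<open>X \<subseteq> E\<close>).\<close>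
definition restr :: "'a matroid \<Rightarrow> 'a set \<Rightarrow> 'a matroid" where
  "restr M X = (X, {I. indep M I \<and> I \<subseteq> X})"

definition contr :: "'a matroid \<Rightarrow> 'a set \<Rightarrow> 'a matroid" where
  "contr M X = dual (restr (dual M) (ground M - X))"

definition contr_to :: "'a matroid \<Rightarrow> 'a set \<Rightarrow> 'a matroid" where
  "contr_to M X = contr M (ground M - X)"

definition loop :: "'a matroid \<Rightarrow> 'a \<Rightarrow> bool" where
  "loop M e \<longleftrightarrow> e \<in> ground M \<and> \<not> indep M {e}"

definition rank_zero :: "'a matroid \<Rightarrow> bool" where
  "rank_zero K \<longleftrightarrow> base K {}"

definition wave :: "'a matroid \<Rightarrow> 'a matroid \<Rightarrow> 'a set \<Rightarrow> bool" where
  "wave M N W \<longleftrightarrow> W \<subseteq> ground M \<and>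
     (\<exists>B. base (restr M W) B \<and> indep (contr_to N W) B)"

definition wave_union :: "'a matroid \<Rightarrow> 'a matroid \<Rightarrow> 'a set" where
  "wave_union M N = \<Union>{W. wave M N W}"

definition common_bases :: "'a matroid \<Rightarrow> 'a matroid \<Rightarrow> 'a set \<Rightarrow> 'a set set" where
  "common_bases M N X = {B. base (restr M X) B \<and> base (contr_to N X) B}"

definition cond :: "'a matroid \<Rightarrow> 'a matroid \<Rightarrow> bool" where
  "cond M N \<longleftrightarrow> (\<forall>W. wave M N W \<longrightarrow> (\<exists>B. base (contr_to N W) B \<and> indep M B))"

definition cond_plus :: "'a matroid \<Rightarrow> 'a matroid \<Rightarrow> bool" where
  "cond_plus M N \<longleftrightarrow> (\<forall>e \<in> wave_union M N. loop M e) \<and>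
                      rank_zero (contr_to N (wave_union M N))"

definition feasible :: "'a matroid \<Rightarrow> 'a matroid \<Rightarrow> 'a set \<Rightarrow> bool" where
  "feasible M N I \<longleftrightarrow> indep M I \<and> indep N I \<and> cond (contr M I) (contr N I)"

definition nice_feasible :: "'a matroid \<Rightarrow> 'a matroid \<Rightarrow> 'a set \<Rightarrow> bool" where
  "nice_feasible M N I \<longleftrightarrow> feasible M N I \<and> cond_plus (contr M I) (contr N I)"

end

theory Submission
  imports Defs
begin

text \<open>Since \<open>(M/I)/B = M/(I \<union> B)\<close>, it suffices to treat \<open>I = {}\<close>. Let \<open>W\<close> be the union
of all \<open>(M,N)\<close>-waves and \<open>B\<close> a common base of \<open>M\<upharpoonright>W\<close> and \<open>N.W\<close>. As \<open>B\<close> is a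
maximal \<open>M\<close>-independent subset of \<open>W\<close>, every element of \<open>W - B\<close> is a loop of \<open>M/B\<close>.
If \<open>I\<^sub>0\<close> is a maximal \<open>N\<close>-independent subset of \<open>E - W\<close>, then \<open>I\<^sub>0 \<union> B\<close> is a base
of \<open>N\<close>, so \<open>I\<^sub>0\<close> is a base of \<open>N/B\<close> disjoint from \<open>W\<close>; hence \<open>(N/B).U\<close> has rank
zero for every \<open>U \<subseteq> W - B\<close>. Finally every \<open>(M/B,N/B)\<close>-wave \<open>V\<close> lies in \<open>W - B\<close>:
a witness for \<open>V\<close> together with \<open>B\<close> witnesses that \<open>W \<union> V\<close> is an \<open>(M,N)\<close>-wave.\<close>

lemma ground_dual [simp]: "ground (dual M) = ground M"
  by (simp add: dual_def ground_def)

lemma indep_dual_iff: "indep (dual M) X \<longleftrightarrow> X \<subseteq> ground M \<and> (\<exists>B. base M B \<and> X \<inter> B = {})"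
  by (simp add: dual_def indep_def ground_def)

lemma ground_restr [simp]: "ground (restr M X) = X"
  by (simp add: restr_def ground_def)

lemma indep_restr_iff: "indep (restr M X) Y \<longleftrightarrow> indep M Y \<and> Y \<subseteq> X"
  by (simp add: restr_def indep_def)

lemma ground_contr [simp]: "ground (contr M X) = ground M - X"
  by (simp add: contr_def)

lemma indep_contr_dual_iff:
  "indep (contr M X) Y \<longleftrightarrow>
     Y \<subseteq> ground M - X \<and> (\<exists>D. base (restr (dual M) (ground M - X)) D \<and> Y \<inter> D = {})"
  by (simp add: contr_def indep_dual_iff)

lemma indep_contr_subset: "indep (contr M X) Y \<Longrightarrow> Y \<subseteq> ground M - X"
  by (simp add: indep_contr_dual_iff)

lemma matroid_eqI:
  assumes "ground M = ground N" and "\<And>Y. indep M Y \<longleftrightarrow> indep N Y"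
  shows "M = N"
  using assms by (simp add: ground_def indep_def prod_eq_iff set_eq_iff)

definition maximal_indep :: "'a matroid \<Rightarrow> 'a set \<Rightarrow> 'a set \<Rightarrow> bool" where
  "maximal_indep M X J \<longleftrightarrow>
     indep M J \<and> J \<subseteq> X \<and> (\<forall>K. indep M K \<and> J \<subseteq> K \<and> K \<subseteq> X \<longrightarrow> K = J)"

lemma maximal_indepD:
  assumes "maximal_indep M X J"
  shows "indep M J" and "J \<subseteq> X" and "\<And>K. indep M K \<Longrightarrow> J \<subseteq> K \<Longrightarrow> K \<subseteq> X \<Longrightarrow> K = J"
  using assms unfolding maximal_indep_def by auto

lemma maximal_indep_self: "indep M I \<Longrightarrow> maximal_indep M I I"
  unfolding maximal_indep_def by blast

lemma base_restr_iff: "base (restr M X) B \<longleftrightarrow> maximal_indep M X B"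
  unfolding base_def maximal_indep_def indep_restr_iff by blast

lemma base_indep: "base M B \<Longrightarrow> indep M B"
  unfolding base_def by blast

lemma base_maximal: "base M B \<Longrightarrow> indep M K \<Longrightarrow> B \<subseteq> K \<Longrightarrow> K = B"
  unfolding base_def by blast

lemma base_imp_maximal_indep: "base M B \<Longrightarrow> B \<subseteq> X \<Longrightarrow> maximal_indep M X B"
  unfolding base_def maximal_indep_def by blast

lemma indep_subset_ground: "is_matroid M \<Longrightarrow> indep M I \<Longrightarrow> I \<subseteq> ground M"
  unfolding is_matroid_def by (elim conjE) blast

lemma indep_empty: "is_matroid M \<Longrightarrow> indep M {}"
  unfolding is_matroid_def by (elim conjE)

lemma indep_subset: "is_matroid M \<Longrightarrow> indep M J \<Longrightarrow> I \<subseteq> J \<Longrightarrow> indep M I"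
  unfolding is_matroid_def by (elim conjE) blast

lemma indep_augment:
  assumes "is_matroid M" and "indep M I" and "\<not> base M I" and "base M B"
  shows "\<exists>x \<in> B - I. indep M (insert x I)"
proof -
  have "\<forall>I B. indep M I \<and> \<not> base M I \<and> base M B \<longrightarrow> (\<exists>x \<in> B - I. indep M (insert x I))"
    using assms(1) unfolding is_matroid_def by (elim conjE)
  with assms(2-4) show ?thesis by blast
qed

lemma exists_maximal_indep:
  assumes "is_matroid M" and "indep M I" and "I \<subseteq> X" and "X \<subseteq> ground M"
  obtains J where "maximal_indep M X J" and "I \<subseteq> J"
proof -
  have "\<forall>I X. indep M I \<and> I \<subseteq> X \<and> X \<subseteq> ground M \<longrightarrow>
          (\<exists>J. indep M J \<and> I \<subseteq> J \<and> J \<subseteq> X \<and>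
               (\<forall>K. indep M K \<and> J \<subseteq> K \<and> K \<subseteq> X \<longrightarrow> K = J))"
    using assms(1) unfolding is_matroid_def by (elim conjE)
  then have "\<exists>J. maximal_indep M X J \<and> I \<subseteq> J"
    using assms(2-4) unfolding maximal_indep_def by meson
  then show thesis
    using that by auto
qed

lemma base_iff_maximal_indep_ground:
  "is_matroid M \<Longrightarrow> base M B \<longleftrightarrow> maximal_indep M (ground M) B"
  unfolding base_def maximal_indep_def using indep_subset_ground by blast

lemma exists_base_superset:
  assumes "is_matroid M" and "indep M I"
  obtains B where "base M B" and "I \<subseteq> B"
proof -
  obtain J where "maximal_indep M (ground M) J" and "I \<subseteq> J"
    by (rule exists_maximal_indep[OF assms indep_subset_ground[OF assms] order_refl])
  then show thesis
    using that base_iff_maximal_indep_ground[OF assms(1)] by simp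
qed

lemma maximal_indep_containing_base:
  assumes M: "is_matroid M" and B: "base M B" and "B \<subseteq> X" and J: "maximal_indep M X J"
  shows "base M J"
proof (rule ccontr)
  assume "\<not> base M J"
  from indep_augment[OF M maximal_indepD(1)[OF J] this B]
  obtain x where "x \<in> B - J" and "indep M (insert x J)" ..
  moreover have "insert x J \<subseteq> X"
    using \<open>x \<in> B - J\<close> \<open>B \<subseteq> X\<close> maximal_indepD(2)[OF J] by blast
  ultimately have "insert x J = J"
    using maximal_indepD(3)[OF J] by blast
  with \<open>x \<in> B - J\<close> show False by auto
qed

lemma maximal_indep_inter:
  assumes "is_matroid M" and "maximal_indep M X I" and "indep M J" and "I \<subseteq> J"
  shows "J \<inter> X = I"
  using maximal_indepD[OF assms(2)] indep_subset[OF assms(1,3), of "J \<inter> X"] assms(4)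
  by blast

lemma exists_base_between:
  assumes M: "is_matroid M" and I: "maximal_indep M X I" and B: "base M B"
  obtains J where "base M J" and "I \<subseteq> J" and "J \<subseteq> I \<union> B"
proof -
  have "I \<union> B \<subseteq> ground M"
    using indep_subset_ground[OF M maximal_indepD(1)[OF I]] indep_subset_ground[OF M base_indep[OF B]]
    by blast
  then obtain J where J: "maximal_indep M (I \<union> B) J" and "I \<subseteq> J"
    using exists_maximal_indep[OF M maximal_indepD(1)[OF I]] by blast
  moreover have "base M J"
    using maximal_indep_containing_base[OF M B _ J] by blast
  ultimately show thesis
    using that maximal_indepD(2)[OF J] by blast
qed

lemma base_restr_dual_diff:
  assumes M: "is_matroid M" and I: "maximal_indep M X I"
    and J: "base M J" and "I \<subseteq> J"
  shows "base (restr (dual M) (ground M - X)) (ground M - X - J)"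
  unfolding base_restr_iff maximal_indep_def indep_dual_iff
proof (intro conjI allI impI)
  show "ground M - X - J \<subseteq> ground M" and "ground M - X - J \<subseteq> ground M - X"
    and "\<exists>B. base M B \<and> (ground M - X - J) \<inter> B = {}"
    using J by blast+
  fix D
  assume "(D \<subseteq> ground M \<and> (\<exists>B. base M B \<and> D \<inter> B = {})) \<and>
          ground M - X - J \<subseteq> D \<and> D \<subseteq> ground M - X"
  then obtain B where B: "base M B" and "D \<inter> B = {}"
    and "ground M - X - J \<subseteq> D" and "D \<subseteq> ground M - X"
    by blast
  obtain J' where J': "base M J'" and "I \<subseteq> J'" and "J' \<subseteq> I \<union> B"
    using exists_base_between[OF M I B] .
  have "J' \<inter> X = I"
    using maximal_indep_inter[OF M I base_indep[OF J'] \<open>I \<subseteq> J'\<close>] .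
  moreover have "J' \<subseteq> ground M"
    using indep_subset_ground[OF M base_indep[OF J']] .
  ultimately have "J' \<subseteq> J"
    using \<open>I \<subseteq> J\<close> \<open>J' \<subseteq> I \<union> B\<close> \<open>D \<inter> B = {}\<close> \<open>ground M - X - J \<subseteq> D\<close> by blast
  then have "J' = J"
    using base_maximal[OF J' base_indep[OF J]] by blast
  then have "D \<subseteq> ground M - X - J"
    using \<open>J' \<subseteq> I \<union> B\<close> \<open>D \<inter> B = {}\<close> \<open>D \<subseteq> ground M - X\<close> maximal_indepD(2)[OF I] by blast
  with \<open>ground M - X - J \<subseteq> D\<close> show "D = ground M - X - J"
    by blast
qed

lemma base_restr_dual_obtain:
  assumes M: "is_matroid M" and I: "maximal_indep M X I"
    and D: "base (restr (dual M) (ground M - X)) D"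
  obtains J where "base M J" and "I \<subseteq> J" and "D = ground M - X - J"
proof -
  obtain B where B: "base M B" and "D \<inter> B = {}" and "D \<subseteq> ground M - X"
    using D unfolding base_restr_iff maximal_indep_def indep_dual_iff by blast
  obtain J where J: "base M J" and "I \<subseteq> J" and "J \<subseteq> I \<union> B"
    using exists_base_between[OF M I B] .
  have J_base_dual: "base (restr (dual M) (ground M - X)) (ground M - X - J)"
    using base_restr_dual_diff[OF M I J \<open>I \<subseteq> J\<close>] .
  have "D \<subseteq> ground M - X - J"
    using \<open>D \<inter> B = {}\<close> \<open>D \<subseteq> ground M - X\<close> \<open>J \<subseteq> I \<union> B\<close> maximal_indepD(2)[OF I] by blast
  then have "D = ground M - X - J"
    using base_maximal[OF D base_indep[OF J_base_dual]] by blast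
  with J \<open>I \<subseteq> J\<close> show thesis
    using that by blast
qed

lemma indep_contr_iff:
  assumes M: "is_matroid M" and I: "maximal_indep M X I"
  shows "indep (contr M X) Y \<longleftrightarrow> Y \<subseteq> ground M - X \<and> indep M (I \<union> Y)"
proof
  assume "indep (contr M X) Y"
  then obtain D where Y: "Y \<subseteq> ground M - X" and D: "base (restr (dual M) (ground M - X)) D"
    and "Y \<inter> D = {}"
    unfolding indep_contr_dual_iff by blast
  obtain J where J: "base M J" and "I \<subseteq> J" and "D = ground M - X - J"
    using base_restr_dual_obtain[OF M I D] .
  then have "I \<union> Y \<subseteq> J"
    using Y \<open>Y \<inter> D = {}\<close> by blast
  with Y show "Y \<subseteq> ground M - X \<and> indep M (I \<union> Y)"
    using indep_subset[OF M base_indep[OF J]] by blast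
next
  assume Y: "Y \<subseteq> ground M - X \<and> indep M (I \<union> Y)"
  then obtain J where J: "base M J" and "I \<union> Y \<subseteq> J"
    using exists_base_superset[OF M] by blast
  then have "base (restr (dual M) (ground M - X)) (ground M - X - J)"
    using base_restr_dual_diff[OF M I] by blast
  moreover have "Y \<inter> (ground M - X - J) = {}"
    using \<open>I \<union> Y \<subseteq> J\<close> by blast
  ultimately show "indep (contr M X) Y"
    using Y unfolding indep_contr_dual_iff by blast
qed

lemma base_contr_iff:
  assumes M: "is_matroid M" and I: "maximal_indep M X I"
  shows "base (contr M X) Y \<longleftrightarrow> Y \<subseteq> ground M - X \<and> base M (I \<union> Y)"
proof
  assume Y: "base (contr M X) Y"
  then have "Y \<subseteq> ground M - X" and "indep M (I \<union> Y)"
    using base_indep[OF Y] unfolding indep_contr_iff[OF M I] by auto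
  moreover have "K = I \<union> Y" if K: "indep M K" "I \<union> Y \<subseteq> K" for K
  proof -
    have "K \<inter> X = I"
      using maximal_indep_inter[OF M I K(1)] K(2) by blast
    then have "I \<union> (K - X) = K"
      by blast
    then have "indep (contr M X) (K - X)"
      unfolding indep_contr_iff[OF M I] using K(1) indep_subset_ground[OF M K(1)] by auto
    then have "K - X = Y"
      using base_maximal[OF Y] K(2) \<open>Y \<subseteq> ground M - X\<close> by blast
    with \<open>I \<union> (K - X) = K\<close> show "K = I \<union> Y"
      by blast
  qed
  ultimately show "Y \<subseteq> ground M - X \<and> base M (I \<union> Y)"
    unfolding base_def by blast
next
  assume Y: "Y \<subseteq> ground M - X \<and> base M (I \<union> Y)"
  show "base (contr M X) Y"
    unfolding base_def indep_contr_iff[OF M I]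
  proof (intro conjI allI impI)
    show "Y \<subseteq> ground M - X" and "indep M (I \<union> Y)"
      using Y base_indep[of M "I \<union> Y"] by auto
    fix K
    assume "(K \<subseteq> ground M - X \<and> indep M (I \<union> K)) \<and> Y \<subseteq> K"
    then have "I \<union> K = I \<union> Y" and "K \<inter> X = {}"
      using base_maximal[of M "I \<union> Y" "I \<union> K"] Y by blast+
    with Y maximal_indepD(2)[OF I] show "K = Y"
      by blast
  qed
qed

lemma indep_contr_indep_iff:
  assumes "is_matroid M" and "indep M I"
  shows "indep (contr M I) Y \<longleftrightarrow> Y \<subseteq> ground M - I \<and> indep M (I \<union> Y)"
  using indep_contr_iff[OF assms(1) maximal_indep_self[OF assms(2)]] .

lemma base_contr_indep_iff:
  assumes "is_matroid M" and "indep M I"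
  shows "base (contr M I) Y \<longleftrightarrow> Y \<subseteq> ground M - I \<and> base M (I \<union> Y)"
  using base_contr_iff[OF assms(1) maximal_indep_self[OF assms(2)]] .

lemma indep_Un_of_indep_contr:
  assumes M: "is_matroid M" and X: "X \<subseteq> ground M" and Y: "indep (contr M X) Y"
    and I: "indep M I" "I \<subseteq> X"
  shows "indep M (I \<union> Y)"
proof -
  obtain J where J: "maximal_indep M X J" and "I \<subseteq> J"
    using exists_maximal_indep[OF M I X] .
  then have "indep M (J \<union> Y)"
    using Y unfolding indep_contr_iff[OF M J] by blast
  with \<open>I \<subseteq> J\<close> show ?thesis
    using indep_subset[OF M] by blast
qed

lemma maximal_indep_contr:
  assumes M: "is_matroid M" and I: "indep M I" and X: "X \<subseteq> ground M - I"
    and J: "maximal_indep M (I \<union> X) J" and "I \<subseteq> J"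
  shows "maximal_indep (contr M I) X (J - I)"
  unfolding maximal_indep_def indep_contr_indep_iff[OF M I]
proof (intro conjI allI impI)
  show "J - I \<subseteq> X" and "J - I \<subseteq> ground M - I"
    using maximal_indepD(2)[OF J] X by blast+
  show "indep M (I \<union> (J - I))"
    using maximal_indepD(1)[OF J] \<open>I \<subseteq> J\<close> by (simp add: Un_absorb1)
  fix K
  assume K: "(K \<subseteq> ground M - I \<and> indep M (I \<union> K)) \<and> J - I \<subseteq> K \<and> K \<subseteq> X"
  then have "I \<union> K = J"
    using maximal_indepD(3)[OF J, of "I \<union> K"] by blast
  with K show "K = J - I"
    by blast
qed

lemma contr_is_matroid:
  assumes M: "is_matroid M" and I: "indep M I"
  shows "is_matroid (contr M I)"
  unfolding is_matroid_def
proof (intro conjI allI impI)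
  fix Y
  assume "indep (contr M I) Y"
  then show "Y \<subseteq> ground (contr M I)"
    unfolding indep_contr_indep_iff[OF M I] by simp
next
  show "indep (contr M I) {}"
    unfolding indep_contr_indep_iff[OF M I] using I by simp
next
  fix Y Z
  assume "indep (contr M I) Z \<and> Y \<subseteq> Z"
  then show "indep (contr M I) Y"
    unfolding indep_contr_indep_iff[OF M I] using indep_subset[OF M, of "I \<union> Z" "I \<union> Y"] by blast
next
  fix Y B
  assume "indep (contr M I) Y \<and> \<not> base (contr M I) Y \<and> base (contr M I) B"
  then have Y: "Y \<subseteq> ground M - I" "indep M (I \<union> Y)" and "\<not> base M (I \<union> Y)"
    and B: "B \<subseteq> ground M - I" "base M (I \<union> B)"
    unfolding indep_contr_indep_iff[OF M I] base_contr_indep_iff[OF M I] by auto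
  then obtain x where "x \<in> (I \<union> B) - (I \<union> Y)" and "indep M (insert x (I \<union> Y))"
    using indep_augment[OF M Y(2)] by blast
  with B Y show "\<exists>x\<in>B - Y. indep (contr M I) (insert x Y)"
    unfolding indep_contr_indep_iff[OF M I] by auto
next
  fix Y X
  assume "indep (contr M I) Y \<and> Y \<subseteq> X \<and> X \<subseteq> ground (contr M I)"
  then have Y: "indep M (I \<union> Y)" "Y \<subseteq> X" and X: "X \<subseteq> ground M - I"
    unfolding indep_contr_indep_iff[OF M I] by auto
  moreover have "I \<union> X \<subseteq> ground M"
    using X indep_subset_ground[OF M I] by blast
  ultimately obtain J where J: "maximal_indep M (I \<union> X) J" and "I \<union> Y \<subseteq> J"
    using exists_maximal_indep[OF M Y(1), of "I \<union> X"] by blast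
  then have "maximal_indep (contr M I) X (J - I)"
    using maximal_indep_contr[OF M I X] by blast
  moreover have "Y \<subseteq> J - I"
    using \<open>I \<union> Y \<subseteq> J\<close> X Y(2) by blast
  ultimately show "\<exists>J. indep (contr M I) J \<and> Y \<subseteq> J \<and> J \<subseteq> X \<and>
                      (\<forall>K. indep (contr M I) K \<and> J \<subseteq> K \<and> K \<subseteq> X \<longrightarrow> K = J)"
    unfolding maximal_indep_def by blast
qed

lemma contr_contr:
  assumes M: "is_matroid M" and I: "indep M I" and B: "indep (contr M I) B"
  shows "contr (contr M I) B = contr M (I \<union> B)"
proof (rule matroid_eqI)
  have IB: "indep M (I \<union> B)" and "B \<subseteq> ground M - I"
    using B unfolding indep_contr_indep_iff[OF M I] by auto
  show "ground (contr (contr M I) B) = ground (contr M (I \<union> B))"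
    by auto
  fix Y
  show "indep (contr (contr M I) B) Y \<longleftrightarrow> indep (contr M (I \<union> B)) Y"
    unfolding indep_contr_indep_iff[OF contr_is_matroid[OF M I] B]
      indep_contr_indep_iff[OF M IB] indep_contr_indep_iff[OF M I]
    using \<open>B \<subseteq> ground M - I\<close> by (auto simp: Un_assoc)
qed

lemma indep_of_indep_contr:
  assumes "is_matroid M" and "X \<subseteq> ground M" and "indep (contr M X) Y"
  shows "indep M Y"
  using indep_Un_of_indep_contr[OF assms indep_empty[OF assms(1)]] by simp

lemma base_contr_swap:
  assumes N: "is_matroid N" and X: "X \<subseteq> ground N" and I: "maximal_indep N X I"
    and B: "base (contr N X) B"
  shows "base (contr N B) I"
proof -
  have "B \<subseteq> ground N - X" and "base N (I \<union> B)"
    using B unfolding base_contr_iff[OF N I] by auto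
  moreover have "indep N B"
    using indep_of_indep_contr[OF N X base_indep[OF B]] .
  ultimately show ?thesis
    unfolding base_contr_indep_iff[OF N \<open>indep N B\<close>]
    using maximal_indepD(2)[OF I] X by (auto simp: Un_commute)
qed

lemma rank_zero_contr_to:
  assumes M: "is_matroid M" and J: "base M J" and "J \<inter> U = {}"
  shows "rank_zero (contr_to M U)"
proof -
  have "maximal_indep M (ground M - U) J"
    using base_imp_maximal_indep[OF J] indep_subset_ground[OF M base_indep[OF J]] \<open>J \<inter> U = {}\<close>
    by blast
  note indep_iff = indep_contr_iff[OF M this]
  show ?thesis
    unfolding rank_zero_def contr_to_def base_def indep_iff
  proof (intro conjI allI impI)
    show "{} \<subseteq> ground M - (ground M - U)" and "indep M (J \<union> {})"
      using base_indep[OF J] by auto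
    fix K
    assume K: "(K \<subseteq> ground M - (ground M - U) \<and> indep M (J \<union> K)) \<and> {} \<subseteq> K"
    then have "J \<union> K = J"
      using base_maximal[OF J] by blast
    with K \<open>J \<inter> U = {}\<close> show "K = {}"
      by blast
  qed
qed

lemma loop_contr_maximal_indep:
  assumes M: "is_matroid M" and W: "W \<subseteq> ground M" and B: "maximal_indep M W B"
    and e: "e \<in> W - B"
  shows "loop (contr M B) e"
  unfolding loop_def indep_contr_indep_iff[OF M maximal_indepD(1)[OF B]]
proof
  show "e \<in> ground (contr M B)"
    using e W by auto
  have "insert e B \<subseteq> W"
    using e maximal_indepD(2)[OF B] by blast
  then have "\<not> indep M (insert e B)"
    using maximal_indepD(3)[OF B, of "insert e B"] e by blast
  then show "\<not> ({e} \<subseteq> ground M - B \<and> indep M (B \<union> {e}))"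
    by simp
qed

lemma maximal_indep_Un_contr:
  assumes M: "is_matroid M" and B: "maximal_indep M W B"
    and B': "maximal_indep (contr M B) V B'"
  shows "maximal_indep M (W \<union> V) (B \<union> B')"
proof -
  note indep_iff = indep_contr_indep_iff[OF M maximal_indepD(1)[OF B]]
  have "B' \<subseteq> ground M - B" and "indep M (B \<union> B')"
    using maximal_indepD(1)[OF B'] unfolding indep_iff by auto
  moreover have "K = B \<union> B'" if K: "indep M K" "B \<union> B' \<subseteq> K" "K \<subseteq> W \<union> V" for K
  proof -
    have "K \<inter> W = B"
      using maximal_indepD(3)[OF B, of "K \<inter> W"] indep_subset[OF M K(1)] K(2)
        maximal_indepD(2)[OF B] by blast
    then have "B \<union> (K - B) = K" and "K - B \<subseteq> V"
      using K(3) by blast+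
    moreover have "K - B \<subseteq> ground M - B"
      using indep_subset_ground[OF M K(1)] by blast
    ultimately have "indep (contr M B) (K - B)"
      unfolding indep_iff using K(1) by simp
    then have "K - B = B'"
      using maximal_indepD(3)[OF B'] \<open>K - B \<subseteq> V\<close> K(2) \<open>B' \<subseteq> ground M - B\<close> by blast
    with \<open>B \<union> (K - B) = K\<close> show ?thesis
      by blast
  qed
  ultimately show ?thesis
    unfolding maximal_indep_def using maximal_indepD(2)[OF B] maximal_indepD(2)[OF B'] by blast
qed

lemma indep_contr_to_Un_contr:
  assumes N: "is_matroid N" and B: "indep (contr_to N W) B"
    and B': "indep (contr_to (contr N B) V) B'"
  shows "indep (contr_to N (W \<union> V)) (B \<union> B')"
proof -
  define S where "S = ground N - (W \<union> V)"
  have S: "S \<subseteq> ground N"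
    unfolding S_def by blast
  obtain I where I: "maximal_indep N S I"
    using exists_maximal_indep[OF N indep_empty[OF N] empty_subsetI S] by blast
  have BW: "B \<subseteq> W \<inter> ground N"
    using indep_contr_subset[OF B[unfolded contr_to_def]] by blast
  have "indep N (I \<union> B)"
    using indep_Un_of_indep_contr[OF N _ B[unfolded contr_to_def] maximal_indepD(1)[OF I]]
      maximal_indepD(2)[OF I] unfolding S_def by blast
  then have NB: "indep N B"
    using indep_subset[OF N] by blast
  have "indep (contr N B) I"
    unfolding indep_contr_indep_iff[OF N NB]
    using \<open>indep N (I \<union> B)\<close> maximal_indepD(2)[OF I] BW unfolding S_def by (auto simp: Un_commute)
  moreover have "I \<subseteq> ground (contr N B) - V"
    using maximal_indepD(2)[OF I] BW unfolding S_def by auto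
  ultimately have "indep (contr N B) (I \<union> B')"
    using indep_Un_of_indep_contr[OF contr_is_matroid[OF N NB] Diff_subset B'[unfolded contr_to_def]]
    by blast
  then have "indep N (I \<union> (B \<union> B'))" and "B' \<subseteq> ground N - B"
    unfolding indep_contr_indep_iff[OF N NB] by (auto simp: Un_ac)
  moreover have "B' \<subseteq> V"
    using indep_contr_subset[OF B'[unfolded contr_to_def]] by auto
  ultimately show ?thesis
    unfolding contr_to_def indep_contr_iff[OF N I[unfolded S_def]]
    using BW by auto
qed

lemma wave_Un_contr:
  assumes M: "is_matroid M" and N: "is_matroid N" and W: "W \<subseteq> ground M"
    and B: "maximal_indep M W B" "indep (contr_to N W) B"
    and V: "wave (contr M B) (contr N B) V"
  shows "wave M N (W \<union> V)"
proof -
  obtain B' where "V \<subseteq> ground M - B" and "maximal_indep (contr M B) V B'"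
    and "indep (contr_to (contr N B) V) B'"
    using V unfolding wave_def base_restr_iff by auto
  with W show ?thesis
    unfolding wave_def base_restr_iff
    using maximal_indep_Un_contr[OF M B(1)] indep_contr_to_Un_contr[OF N B(2)] by blast
qed

lemma nice_feasible_common_base:
  assumes M: "is_matroid M" and N: "is_matroid N"
    and "B \<in> common_bases M N (wave_union M N)"
  shows "nice_feasible M N B"
proof -
  define W where "W = wave_union M N"
  have W: "W \<subseteq> ground M"
    unfolding W_def wave_union_def wave_def by blast
  have BM: "maximal_indep M W B" and BN: "base (contr N (ground N - W)) B"
    using assms(3) unfolding W_def common_bases_def base_restr_iff contr_to_def by auto
  obtain I where I: "maximal_indep N (ground N - W) I"
    using exists_maximal_indep[OF N indep_empty[OF N] empty_subsetI Diff_subset] by blast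
  have MB: "indep M B"
    using maximal_indepD(1)[OF BM] .
  have NB: "indep N B"
    using indep_of_indep_contr[OF N Diff_subset base_indep[OF BN]] .
  have waves: "V \<subseteq> W - B" if "wave (contr M B) (contr N B) V" for V
  proof -
    have "wave M N (W \<union> V)"
      using wave_Un_contr[OF M N W BM _ that] base_indep[OF BN] unfolding contr_to_def by blast
    then have "W \<union> V \<subseteq> W"
      unfolding W_def wave_union_def by blast
    moreover have "V \<subseteq> ground M - B"
      using that unfolding wave_def by simp
    ultimately show ?thesis
      by blast
  qed
  have rank_zero: "rank_zero (contr_to (contr N B) U)" if "U \<subseteq> W - B" for U
    using rank_zero_contr_to[OF contr_is_matroid[OF N NB] base_contr_swap[OF N Diff_subset I BN]]
      maximal_indepD(2)[OF I] that by blast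
  have "cond (contr M B) (contr N B)"
    unfolding cond_def using waves rank_zero indep_empty[OF contr_is_matroid[OF M MB]]
    unfolding rank_zero_def by blast
  moreover have "wave_union (contr M B) (contr N B) \<subseteq> W - B"
    using waves unfolding wave_union_def by blast
  then have "cond_plus (contr M B) (contr N B)"
    unfolding cond_plus_def using rank_zero loop_contr_maximal_indep[OF M W BM] by blast
  ultimately show ?thesis
    unfolding nice_feasible_def feasible_def using MB NB by blast
qed

lemma nice_feasible_of_contr:
  assumes M: "is_matroid M" and N: "is_matroid N" and I: "indep M I" "indep N I"
    and B: "nice_feasible (contr M I) (contr N I) B"
  shows "nice_feasible M N (I \<union> B)"
proof -
  have MB: "indep (contr M I) B" and NB: "indep (contr N I) B"
    using B unfolding nice_feasible_def feasible_def by auto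
  then have "indep M (I \<union> B)" and "indep N (I \<union> B)"
    unfolding indep_contr_indep_iff[OF M I(1)] indep_contr_indep_iff[OF N I(2)] by auto
  with B show ?thesis
    unfolding nice_feasible_def feasible_def contr_contr[OF M I(1) MB] contr_contr[OF N I(2) NB]
    by blast
qed

theorem mainTheorem9:
  fixes M N :: "'a matroid" and E I W B :: "'a set"
  assumes "is_matroid M" and "is_matroid N"
    and "ground M = E" and "ground N = E"
    and "indep M I" and "indep N I"
    and "W = wave_union (contr M I) (contr N I)"
    and "B \<in> common_bases (contr M I) (contr N I) W"
  shows "nice_feasible M N (I \<union> B)"
proof (rule nice_feasible_of_contr[OF assms(1,2,5,6)])
  show "nice_feasible (contr M I) (contr N I) B"
    using nice_feasible_common_base[OF contr_is_matroid[OF assms(1,5)] contr_is_matroid[OF assms(2,6)]]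
      assms(7,8) by simp
qed

end
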